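(* Let $\mathcal C$ be a finite set of vectors in $\mathbb R^N$. Let $\{x_n\}\subset\mathbb R^N_{>0}$ be a partially monotonic sequence such that $\lim_{n\to\infty}x_{n,i}\in\{0,\infty\}$ for at least one $i\in\{1,\dots,N\}$. Let $U=\{i:\lim_{n\to\infty}x_{n,i}=0\}$ and $V=\{j:\lim_{n\to\infty}x_{n,j}=\infty\}$. Suppose $\mathcal C$ is partitioned along $\{x_n\}$ with tiers $T_1,\dots,T_P$ and some constant $C$. Then there exists a conservation relation $w\in\mathbb R^N$ that respects the triple $(U,V,\{T_i\})$.
   Context: For $u\in\mathbb R^N_{\ge0}$, $v\in\mathbb R^N$, $u^v=u_1^{v_1}\cdots u_N^{v_N}$ (with $0^0=1$). A partition of $\mathcal C$ is a collection of nonempty pairwise disjoint subsets with union $\mathcal C$. $\mathcal C$ is partitioned along $\{x_n\}$ if there exist a partition $\{T_i\}_{i=1}^P$ of $\mathcal C$ (tiers) and a constant $C>1$ such that (i) if $y_j,y_k\in T_i$ then $\frac1C x_n^{y_j}\le x_n^{y_k}\le Cx_n^{y_j}$ for all $n$, and (ii) if $y_j\in T_i$, $y_k\in T_{i+m}$ with $m\ge1$, then $x_n^{y_j}/x_n^{y_k}\to\infty$ as $n\to\infty$. A sequence $\{x_n\}\subset\mathbb R^N_{>0}$ is partially monotonic if $x_{n,i}\ge x_{n+1,i}$ for all $n$ for each $i$ with $\liminf_n x_{n,i}=0$, and $x_{n,j}\le x_{n+1,j}$ for all $n$ for each $j$ with $\limsup_n x_{n,j}=\infty$. The positive support of $w\in\mathbb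 R^N$ is $\{i:w_i>0\}$, the negative support is $\{i:w_i<0\}$. For $U,V\subset\{1,\dots,N\}$ with $U\cup V$ nonempty, $w\in\mathbb R^N$ is a conservation relation that respects the triple $(U,V,\{T_i\})$ if $U$ is exactly the positive support of $w$, $V$ is exactly the negative support of $w$, and $w\cdot(y_j-y_\ell)=0$ whenever $y_j,y_\ell$ lie in the same tier $T_i$. *)

theory Defs
  imports "HOL-Analysis.Analysis"
begin

definition monpow :: "real^'n \<Rightarrow> real^'n \<Rightarrow> real" where
  "monpow u v = (\<Prod>i\<in>UNIV. if u $ i = 0 then (if v $ i = 0 then 1 else 0) else (u $ i) powr (v $ i))"

text \<open>Tiers are indexed 0..<P (paper: 1..P), in the given order.\<close>
definition is_partition_idx :: "nat \<Rightarrow> (nat \<Rightarrow> 'a set) \<Rightarrow> 'a set \<Rightarrow> bool" where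
  "is_partition_idx P T C \<longleftrightarrow>
     (\<forall>i<P. T i \<noteq> {}) \<and>
     (\<forall>i<P. \<forall>j<P. i \<noteq> j \<longrightarrow> T i \<inter> T j = {}) \<and>
     (\<Union>i<P. T i) = C"

definition partitioned_along_with ::
  "(real^'n) set \<Rightarrow> (nat \<Rightarrow> real^'n) \<Rightarrow> nat \<Rightarrow> (nat \<Rightarrow> (real^'n) set) \<Rightarrow> real \<Rightarrow> bool" where
  "partitioned_along_with C x P T K \<longleftrightarrow>
     is_partition_idx P T C \<and> K > 1 \<and>
     (\<forall>i<P. \<forall>yj\<in>T i. \<forall>yk\<in>T i. \<forall>n.
        monpow (x n) yj / K \<le> monpow (x n) yk \<and> monpow (x n) yk \<le> K * monpow (x n) yj) \<and>
     (\<forall>i m. m \<ge> 1 \<longrightarrow> i + m < P \<longrightarrow> (\<forall>yj\<in>T i. \<forall>yk\<in>T (i + m).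
        filterlim (\<lambda>n. monpow (x n) yj / monpow (x n) yk) at_top sequentially))"

definition partially_monotonic :: "(nat \<Rightarrow> real^'n) \<Rightarrow> bool" where
  "partially_monotonic x \<longleftrightarrow>
     (\<forall>i. liminf (\<lambda>n. ereal (x n $ i)) = 0 \<longrightarrow> (\<forall>n. x n $ i \<ge> x (Suc n) $ i)) \<and>
     (\<forall>j. limsup (\<lambda>n. ereal (x n $ j)) = \<infinity> \<longrightarrow> (\<forall>n. x n $ j \<le> x (Suc n) $ j))"

definition respects_conservation ::
  "real^'n \<Rightarrow> 'n set \<Rightarrow> 'n set \<Rightarrow> nat \<Rightarrow> (nat \<Rightarrow> (real^'n) set) \<Rightarrow> bool" where
  "respects_conservation w U V P T \<longleftrightarrow>
     U \<union> V \<noteq> {} \<and>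
     {i. w $ i > 0} = U \<and> {i. w $ i < 0} = V \<and>
     (\<forall>i<P. \<forall>yj\<in>T i. \<forall>yl\<in>T i. inner w (yj - yl) = 0)"

end

theory Submission
  imports Defs
begin

text \<open>
  Pass to logarithmic coordinates L n = (ln (x n $ i))_i, so that every monomial
  becomes monpow (x n) y = exp (y \<bullet> L n).  Condition (i) of the tier partition says that for
  every difference d = y - y' of two vectors in a common tier the sequence d \<bullet> L n is bounded,
  and boundedness propagates to the whole span W of these differences.  On the other hand,
  along the coordinates in U the sequence L n tends to -\<infinity>, along V to +\<infinity>, and the remaining
  coordinates stay bounded (partial monotonicity).  Hence a vector d with d_i \<ge> 0 on U and
  d_i \<le> 0 on V that is nonzero somewhere on U \<union> V makes d \<bullet> L n tend to -\<infinity>; so W contains no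
  such vector.  A Stiemke-type theorem of the alternative, proved by separating a subspace
  from a simplex, then yields a vector orthogonal to W with positive support exactly U and
  negative support exactly V: the required conservation relation.
\<close>

lemma convex_hull_signed_axes:
  fixes s :: "'n::finite \<Rightarrow> real" and S :: "'n set"
  assumes unit: "\<forall>i\<in>S. s i * s i = 1"
    and z: "z \<in> convex hull ((\<lambda>i. s i *\<^sub>R axis i 1) ` S)"
  shows "(\<forall>j\<in>S. 0 \<le> s j * z $ j) \<and> (\<Sum>j\<in>S. s j * z $ j) = 1"
proof -
  define H where "H = {z :: real^'n. (\<forall>j\<in>S. 0 \<le> s j * z $ j) \<and> (\<Sum>j\<in>S. s j * z $ j) = 1}"
  have "convex H"
    unfolding H_def convex_def
    by (auto simp: algebra_simps sum.distrib simp flip: sum_distrib_left)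
  moreover have "(\<lambda>i. s i *\<^sub>R axis i 1) ` S \<subseteq> H"
    using unit by (auto simp: H_def axis_def if_distrib cong: if_cong)
  ultimately have "convex hull ((\<lambda>i. s i *\<^sub>R axis i 1) ` S) \<subseteq> H"
    by (rule hull_minimal[rotated])
  with z show ?thesis unfolding H_def by blast
qed

lemma span_axes_vanish:
  fixes q :: "real^'n"
  assumes "q \<in> span ((\<lambda>i. axis i 1) ` (- S))" "j \<in> S"
  shows "q $ j = 0"
  using assms(1)
proof (rule span_induct)
  show "subspace {v :: real^'n. v $ j = 0}" unfolding subspace_def by auto
qed (use assms(2) in \<open>auto simp: axis_def\<close>)

lemma subspace_orthogonal_if_bounded_above:
  fixes E :: "'a::real_inner set"
  assumes "subspace E" "\<forall>e\<in>E. inner a e < b" "e \<in> E"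
  shows "inner a e = 0"
proof (rule ccontr)
  assume ne: "inner a e \<noteq> 0"
  have "((b + 1) / inner a e) *\<^sub>R e \<in> E" using assms by (simp add: subspace_scale)
  with assms(2) have "inner a (((b + 1) / inner a e) *\<^sub>R e) < b" by blast
  with ne show False by simp
qed

lemma signed_simplex_avoids_extended_subspace:
  fixes W :: "(real^'n) set" and U V :: "'n set"
  assumes W: "subspace W" and disj: "U \<inter> V = {}"
    and no_sign_vector: "\<forall>z\<in>W. (\<forall>i\<in>U. 0 \<le> z $ i) \<and> (\<forall>i\<in>V. z $ i \<le> 0)
                             \<longrightarrow> (\<forall>i\<in>U \<union> V. z $ i = 0)"
  shows "span (W \<union> (\<lambda>i. axis i 1) ` (- (U \<union> V)))
           \<inter> convex hull ((\<lambda>i. (if i \<in> V then -1 else 1) *\<^sub>R axis i 1) ` (U \<union> V)) = {}"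
proof (rule ccontr)
  define S where "S = U \<union> V"
  define s where "s i = (if i \<in> V then -1 else 1 :: real)" for i
  have unit: "\<forall>i\<in>S. s i * s i = 1" by (simp add: s_def)
  assume "\<not> ?thesis"
  then obtain z where "z \<in> span (W \<union> (\<lambda>i. axis i 1) ` (- S))"
    and z_hull: "z \<in> convex hull ((\<lambda>i. s i *\<^sub>R axis i 1) ` S)"
    unfolding S_def s_def by blast
  then obtain p q where pq: "z = p + q" "p \<in> span W" "q \<in> span ((\<lambda>i. axis i 1) ` (- S))"
    unfolding span_Un by blast
  have "p \<in> W" using pq(2) span_eq_iff[THEN iffD2, OF W] by blast
  have pz: "p $ j = z $ j" if "j \<in> S" for j
    using span_axes_vanish[OF pq(3) that] pq(1) by simp
  have hull: "(\<forall>j\<in>S. 0 \<le> s j * z $ j) \<and> (\<Sum>j\<in>S. s j * z $ j) = 1"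
    using convex_hull_signed_axes[OF unit z_hull] .
  have signs: "(\<forall>i\<in>U. 0 \<le> p $ i) \<and> (\<forall>i\<in>V. p $ i \<le> 0)"
  proof (intro conjI ballI)
    fix i assume "i \<in> U"
    then have "i \<in> S" "s i = 1" using disj by (auto simp: S_def s_def)
    then show "0 \<le> p $ i" using hull pz[of i] by auto
  next
    fix i assume "i \<in> V"
    then have "i \<in> S" "s i = -1" by (auto simp: S_def s_def)
    then show "p $ i \<le> 0" using hull pz[of i] by auto
  qed
  have "\<forall>j\<in>S. p $ j = 0"
    using no_sign_vector \<open>p \<in> W\<close> signs unfolding S_def by blast
  then have "(\<Sum>j\<in>S. s j * z $ j) = 0"
    using pz by (intro sum.neutral) simp
  with hull show False by simp
qed

text \<open>Proved by separating the sets of the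
  previous lemma by a hyperplane.\<close>
lemma stiemke_alternative_sign_pattern:
  fixes W :: "(real^'n) set" and U V :: "'n set"
  assumes W: "subspace W" and disj: "U \<inter> V = {}" and ne: "U \<union> V \<noteq> {}"
    and no_sign_vector: "\<forall>z\<in>W. (\<forall>i\<in>U. 0 \<le> z $ i) \<and> (\<forall>i\<in>V. z $ i \<le> 0)
                             \<longrightarrow> (\<forall>i\<in>U \<union> V. z $ i = 0)"
  shows "\<exists>a. (\<forall>z\<in>W. inner a z = 0) \<and> {i. 0 < a $ i} = U \<and> {i. a $ i < 0} = V"
proof -
  define S where "S = U \<union> V"
  define s where "s i = (if i \<in> V then -1 else 1 :: real)" for i
  define E where "E = span (W \<union> (\<lambda>i. axis i (1::real)) ` (- S))"
  define Dl where "Dl = convex hull ((\<lambda>i. s i *\<^sub>R axis i (1::real)) ` S)"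
  have "subspace E" unfolding E_def by (rule subspace_span)
  have "compact Dl" "convex Dl" "Dl \<noteq> {}"
    using ne by (auto simp: Dl_def S_def compact_convex_hull finite_imp_compact)
  moreover have "E \<inter> Dl = {}"
    using signed_simplex_avoids_extended_subspace[OF W disj no_sign_vector]
    unfolding E_def Dl_def S_def s_def .
  ultimately obtain a b where ab: "\<forall>e\<in>E. inner a e < b" "\<forall>z\<in>Dl. b < inner a z"
    using separating_hyperplane_closed_compact[of E Dl] \<open>subspace E\<close>
    by (meson closed_subspace subspace_imp_convex)
  have aE: "inner a e = 0" if "e \<in> E" for e
    using subspace_orthogonal_if_bounded_above[OF \<open>subspace E\<close> ab(1) that] .
  have "0 < b" using ab(1) \<open>subspace E\<close> by (metis inner_zero_right subspace_0)
  have on_S: "0 < s i * a $ i" if "i \<in> S" for i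
  proof -
    have "s i *\<^sub>R axis i 1 \<in> Dl" unfolding Dl_def using that by (intro hull_inc) auto
    then have "b < inner a (s i *\<^sub>R axis i 1)" using ab(2) by blast
    with \<open>0 < b\<close> show ?thesis by (simp add: inner_axis)
  qed
  have off_S: "a $ i = 0" if "i \<notin> S" for i
  proof -
    have "axis i 1 \<in> E" unfolding E_def using that by (intro span_base) auto
    from aE[OF this] show ?thesis by (simp add: inner_axis)
  qed
  have "0 < a $ i" if "i \<in> U" for i
    using on_S[of i] that disj by (auto simp: S_def s_def split: if_splits)
  moreover have "a $ i < 0" if "i \<in> V" for i
    using on_S[of i] that by (simp add: S_def s_def)
  moreover have "a $ i = 0" if "i \<notin> U" "i \<notin> V" for i
    using off_S[of i] that by (simp add: S_def)
  ultimately have "{i. 0 < a $ i} = U" "{i. a $ i < 0} = V"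
    using disj by fastforce+
  moreover have "\<forall>z\<in>W. inner a z = 0" using aE by (auto simp: E_def intro: span_base)
  ultimately show ?thesis by blast
qed

lemma monpow_eq_exp_inner:
  fixes u v :: "real^'n"
  assumes "\<forall>i. 0 < u $ i"
  shows "monpow u v = exp (inner v (\<chi> i. ln (u $ i)))"
proof -
  have "monpow u v = (\<Prod>i\<in>UNIV. exp (v $ i * ln (u $ i)))"
    unfolding monpow_def using assms
    by (intro prod.cong) (auto simp: powr_def less_imp_neq[symmetric] dest: spec[of _ i for i])
  also have "\<dots> = exp (\<Sum>i\<in>UNIV. v $ i * ln (u $ i))" by (simp add: exp_sum)
  finally show ?thesis by (simp add: inner_vec_def)
qed

lemma log_ratio_bound:
  fixes y y' u :: "real^'n"
  assumes pos: "\<forall>i. 0 < u $ i" and K: "1 < K"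
    and lower: "monpow u y / K \<le> monpow u y'" and upper: "monpow u y' \<le> K * monpow u y"
  shows "\<bar>inner (y - y') (\<chi> i. ln (u $ i))\<bar> \<le> ln K"
proof -
  define a b where "a = inner y (\<chi> i. ln (u $ i))" and "b = inner y' (\<chi> i. ln (u $ i))"
  have "exp (a - ln K) \<le> exp b"
    using lower K pos by (simp add: a_def b_def monpow_eq_exp_inner exp_diff)
  moreover have "exp b \<le> exp (ln K + a)"
    using upper K pos by (simp add: a_def b_def monpow_eq_exp_inner exp_add)
  ultimately have "a - ln K \<le> b" "b \<le> ln K + a" by simp_all
  then show ?thesis by (simp add: a_def b_def inner_diff_left)
qed

lemma tier_difference_log_bounded:
  fixes x :: "nat \<Rightarrow> real^'n"
  assumes pos: "\<forall>n i. 0 < x n $ i" and part: "partitioned_along_with C x P T K"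
    and "i < P" "y \<in> T i" "y' \<in> T i"
  shows "\<bar>inner (y - y') (\<chi> j. ln (x n $ j))\<bar> \<le> ln K"
proof (rule log_ratio_bound)
  show "\<forall>j. 0 < x n $ j" "1 < K" using pos part by (auto simp: partitioned_along_with_def)
  show "monpow (x n) y / K \<le> monpow (x n) y'" "monpow (x n) y' \<le> K * monpow (x n) y"
    using part assms(3-5) unfolding partitioned_along_with_def by blast+
qed

lemma bounded_inner_on_span:
  fixes L :: "nat \<Rightarrow> 'a::real_inner"
  assumes bounded: "\<forall>d\<in>D. \<exists>B. \<forall>n. \<bar>inner d (L n)\<bar> \<le> B" and d: "d \<in> span D"
  shows "\<exists>B. \<forall>n. \<bar>inner d (L n)\<bar> \<le> B"
  using d
proof (rule span_induct)
  show "subspace {d. \<exists>B. \<forall>n. \<bar>inner d (L n)\<bar> \<le> B}"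
    unfolding subspace_def
  proof safe
    show "\<exists>B. \<forall>n. \<bar>inner 0 (L n)\<bar> \<le> B" by auto
  next
    fix a b B1 B2 assume "\<forall>n. \<bar>inner a (L n)\<bar> \<le> B1" "\<forall>n. \<bar>inner b (L n)\<bar> \<le> B2"
    then have "\<forall>n. \<bar>inner (a + b) (L n)\<bar> \<le> B1 + B2"
      by (simp add: inner_add_left) (metis abs_triangle_ineq add_mono order_trans)
    then show "\<exists>B. \<forall>n. \<bar>inner (a + b) (L n)\<bar> \<le> B" by blast
  next
    fix c a B assume "\<forall>n. \<bar>inner a (L n)\<bar> \<le> B"
    then have "\<forall>n. \<bar>inner (c *\<^sub>R a) (L n)\<bar> \<le> \<bar>c\<bar> * B"
      by (simp add: abs_mult mult_left_mono)
    then show "\<exists>B. \<forall>n. \<bar>inner (c *\<^sub>R a) (L n)\<bar> \<le> B" by blast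
  qed
qed (use bounded in blast)

lemma tier_span_log_bounded:
  fixes x :: "nat \<Rightarrow> real^'n"
  assumes pos: "\<forall>n i. 0 < x n $ i" and part: "partitioned_along_with C x P T K"
    and d: "d \<in> span {y - y' | y y'. \<exists>i<P. y \<in> T i \<and> y' \<in> T i}"
  shows "\<exists>B. \<forall>n. \<bar>inner d (\<chi> j. ln (x n $ j))\<bar> \<le> B"
proof (rule bounded_inner_on_span[OF _ d], intro ballI)
  fix d assume "d \<in> {y - y' | y y'. \<exists>i<P. y \<in> T i \<and> y' \<in> T i}"
  then obtain i y y' where "i < P" "y \<in> T i" "y' \<in> T i" "d = y - y'" by blast
  then show "\<exists>B. \<forall>n. \<bar>inner d (\<chi> j. ln (x n $ j))\<bar> \<le> B"
    using tier_difference_log_bounded[OF pos part] by blast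
qed

lemma eventually_bounded_below_if_not_tendsto_zero:
  fixes f :: "nat \<Rightarrow> real"
  assumes pos: "\<forall>n. 0 < f n"
    and mono: "liminf (\<lambda>n. ereal (f n)) = 0 \<Longrightarrow> \<forall>n. f (Suc n) \<le> f n"
    and not_zero: "\<not> f \<longlonglongrightarrow> 0"
  shows "\<exists>r>0. eventually (\<lambda>n. r < f n) sequentially"
proof -
  define g where "g n = ereal (f n)" for n
  have "liminf g \<noteq> 0"
  proof
    assume lim0: "liminf g = 0"
    then have "decseq g" using mono unfolding g_def by (intro decseq_SucI) simp
    then have "g \<longlonglongrightarrow> Inf (range g)" by (rule LIMSEQ_INF)
    moreover from this have "liminf g = Inf (range g)" by (intro lim_imp_Liminf) auto
    ultimately have "g \<longlonglongrightarrow> ereal 0" using lim0 by (simp add: zero_ereal_def)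
    with not_zero show False unfolding g_def by (simp only: lim_ereal)
  qed
  moreover have "0 \<le> liminf g"
    unfolding g_def using pos by (intro Liminf_bounded) (auto simp: less_imp_le)
  ultimately obtain r where "0 < ereal r" "ereal r < liminf g"
    using ereal_dense2 by (metis order_le_less)
  then show ?thesis using less_LiminfD unfolding g_def by force
qed

lemma eventually_bounded_above_if_not_tendsto_infinity:
  fixes f :: "nat \<Rightarrow> real"
  assumes mono: "limsup (\<lambda>n. ereal (f n)) = \<infinity> \<Longrightarrow> \<forall>n. f n \<le> f (Suc n)"
    and not_infinity: "\<not> filterlim f at_top sequentially"
  shows "\<exists>R. eventually (\<lambda>n. f n < R) sequentially"
proof -
  define g where "g n = ereal (f n)" for n
  have "limsup g \<noteq> \<infinity>"
  proof
    assume lim_inf: "limsup g = \<infinity>"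
    then have "incseq g" using mono unfolding g_def by (intro incseq_SucI) simp
    then have "g \<longlonglongrightarrow> Sup (range g)" by (rule LIMSEQ_SUP)
    moreover from this have "limsup g = Sup (range g)" by (intro lim_imp_Limsup) auto
    ultimately have "\<forall>R. eventually (\<lambda>n. ereal R < g n) sequentially"
      using lim_inf by (simp add: tendsto_PInfty)
    then have above: "\<forall>R. eventually (\<lambda>n. R < f n) sequentially" by (simp add: g_def)
    have "filterlim f at_top sequentially"
      unfolding filterlim_at_top
    proof
      fix Z show "eventually (\<lambda>n. Z \<le> f n) sequentially"
        using above[rule_format, of Z] by (rule eventually_mono) simp
    qed
    with not_infinity show False by simp
  qed
  then obtain N where "limsup g < ereal (real N)"
    using less_PInf_Ex_of_nat by blast
  then show ?thesis using Limsup_lessD unfolding g_def by force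
qed

lemma log_coordinates_of_partially_monotonic:
  fixes x :: "nat \<Rightarrow> real^'n"
  assumes pos: "\<forall>n i. 0 < x n $ i" and pm: "partially_monotonic x"
    and U: "U = {i. (\<lambda>n. x n $ i) \<longlonglongrightarrow> 0}"
    and V: "V = {j. filterlim (\<lambda>n. x n $ j) at_top sequentially}"
  shows "\<forall>i\<in>U. filterlim (\<lambda>n. ln (x n $ i)) at_bot sequentially"
    and "\<forall>i\<in>V. filterlim (\<lambda>n. ln (x n $ i)) at_top sequentially"
    and "\<forall>i. i \<notin> U \<union> V \<longrightarrow> (\<exists>M. eventually (\<lambda>n. \<bar>ln (x n $ i)\<bar> \<le> M) sequentially)"
proof -
  show "\<forall>i\<in>U. filterlim (\<lambda>n. ln (x n $ i)) at_bot sequentially"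
  proof
    fix i assume "i \<in> U"
    then have "filterlim (\<lambda>n. x n $ i) (at_right 0) sequentially"
      using pos U by (intro tendsto_imp_filterlim_at_right) auto
    then show "filterlim (\<lambda>n. ln (x n $ i)) at_bot sequentially"
      by (rule filterlim_compose[OF ln_at_0])
  qed
  show "\<forall>i\<in>V. filterlim (\<lambda>n. ln (x n $ i)) at_top sequentially"
    using V by (auto intro: filterlim_compose[OF ln_at_top])
  show "\<forall>i. i \<notin> U \<union> V \<longrightarrow> (\<exists>M. eventually (\<lambda>n. \<bar>ln (x n $ i)\<bar> \<le> M) sequentially)"
  proof (intro allI impI)
    fix i assume "i \<notin> U \<union> V"
    then have not_zero: "\<not> (\<lambda>n. x n $ i) \<longlonglongrightarrow> 0"
      and not_infinity: "\<not> filterlim (\<lambda>n. x n $ i) at_top sequentially"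
      using U V by auto
    have dec: "liminf (\<lambda>n. ereal (x n $ i)) = 0 \<Longrightarrow> \<forall>n. x (Suc n) $ i \<le> x n $ i"
      and inc: "limsup (\<lambda>n. ereal (x n $ i)) = \<infinity> \<Longrightarrow> \<forall>n. x n $ i \<le> x (Suc n) $ i"
      using pm unfolding partially_monotonic_def by blast+
    obtain r where r: "0 < r" and above_r: "eventually (\<lambda>n. r < x n $ i) sequentially"
      using eventually_bounded_below_if_not_tendsto_zero[OF _ dec not_zero] pos by blast
    obtain R where below_R: "eventually (\<lambda>n. x n $ i < R) sequentially"
      using eventually_bounded_above_if_not_tendsto_infinity[OF inc not_infinity] by blast
    have between: "eventually (\<lambda>n. r < x n $ i \<and> x n $ i < R) sequentially"
      using above_r below_R by (rule eventually_conj)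
    have "eventually (\<lambda>n. \<bar>ln (x n $ i)\<bar> \<le> max \<bar>ln r\<bar> \<bar>ln R\<bar>) sequentially"
      using between
    proof eventually_elim
      case (elim n)
      with r have "ln r < ln (x n $ i)" "ln (x n $ i) < ln R" by auto
      then show ?case by linarith
    qed
    then show "\<exists>M. eventually (\<lambda>n. \<bar>ln (x n $ i)\<bar> \<le> M) sequentially" by blast
  qed
qed

lemma sum_tendsto_at_bot_if_one_summand_does:
  fixes f :: "'i::finite \<Rightarrow> 'a \<Rightarrow> real"
  assumes diverges: "filterlim (f i0) at_bot F"
    and bounded_above: "\<And>i. \<exists>c. eventually (\<lambda>t. f i t \<le> c) F"
  shows "filterlim (\<lambda>t. \<Sum>i\<in>UNIV. f i t) at_bot F"
  unfolding filterlim_at_bot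
proof
  fix Z
  obtain c where c: "\<And>i. eventually (\<lambda>t. f i t \<le> c i) F" using bounded_above by metis
  define C where "C = (\<Sum>i\<in>UNIV - {i0}. c i)"
  have "eventually (\<lambda>t. f i0 t \<le> Z - C) F"
    using diverges by (simp add: filterlim_at_bot)
  moreover have "eventually (\<lambda>t. \<forall>i. f i t \<le> c i) F"
    using c by (rule eventually_all_finite)
  ultimately show "eventually (\<lambda>t. (\<Sum>i\<in>UNIV. f i t) \<le> Z) F"
  proof eventually_elim
    case (elim t)
    have "(\<Sum>i\<in>UNIV. f i t) = f i0 t + (\<Sum>i\<in>UNIV - {i0}. f i t)"
      by (simp add: sum.remove)
    also have "\<dots> \<le> (Z - C) + C"
      using elim unfolding C_def by (intro add_mono sum_mono) auto
    finally show ?case by simp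
  qed
qed

lemma sign_pattern_term_bounded_above:
  fixes L :: "nat \<Rightarrow> real^'n" and d :: "real^'n"
  assumes to_bot: "\<forall>i\<in>U. filterlim (\<lambda>n. L n $ i) at_bot sequentially"
    and to_top: "\<forall>i\<in>V. filterlim (\<lambda>n. L n $ i) at_top sequentially"
    and bounded: "\<forall>i. i \<notin> U \<union> V \<longrightarrow> (\<exists>M. eventually (\<lambda>n. \<bar>L n $ i\<bar> \<le> M) sequentially)"
    and sign_U: "\<forall>i\<in>U. 0 \<le> d $ i" and sign_V: "\<forall>i\<in>V. d $ i \<le> 0"
  shows "\<exists>c. eventually (\<lambda>n. d $ i * L n $ i \<le> c) sequentially"
proof (cases "i \<in> U \<union> V")
  case True
  then have "eventually (\<lambda>n. d $ i * L n $ i \<le> 0) sequentially"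
  proof
    assume "i \<in> U"
    with to_bot have "eventually (\<lambda>n. L n $ i \<le> 0) sequentially"
      by (auto simp: filterlim_at_bot)
    then show ?thesis
      using sign_U \<open>i \<in> U\<close> by (auto simp: mult_nonneg_nonpos elim: eventually_mono)
  next
    assume "i \<in> V"
    with to_top have "eventually (\<lambda>n. 0 \<le> L n $ i) sequentially"
      by (auto simp: filterlim_at_top)
    then show ?thesis
      using sign_V \<open>i \<in> V\<close> by (auto simp: mult_nonpos_nonneg elim: eventually_mono)
  qed
  then show ?thesis by blast
next
  case False
  with bounded obtain M where "eventually (\<lambda>n. \<bar>L n $ i\<bar> \<le> M) sequentially" by blast
  then have "eventually (\<lambda>n. d $ i * L n $ i \<le> \<bar>d $ i\<bar> * M) sequentially"
  proof (elim eventually_mono)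
    fix n assume "\<bar>L n $ i\<bar> \<le> M"
    then have "\<bar>d $ i\<bar> * \<bar>L n $ i\<bar> \<le> \<bar>d $ i\<bar> * M" by (simp add: mult_left_mono)
    then show "d $ i * L n $ i \<le> \<bar>d $ i\<bar> * M" by (metis abs_ge_self abs_mult order_trans)
  qed
  then show ?thesis by blast
qed

lemma sign_pattern_term_tendsto_at_bot:
  fixes L :: "nat \<Rightarrow> real^'n" and d :: "real^'n"
  assumes to_bot: "\<forall>i\<in>U. filterlim (\<lambda>n. L n $ i) at_bot sequentially"
    and to_top: "\<forall>i\<in>V. filterlim (\<lambda>n. L n $ i) at_top sequentially"
    and sign_U: "\<forall>i\<in>U. 0 \<le> d $ i" and sign_V: "\<forall>i\<in>V. d $ i \<le> 0"
    and i0: "i0 \<in> U \<union> V" "d $ i0 \<noteq> 0"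
  shows "filterlim (\<lambda>n. d $ i0 * L n $ i0) at_bot sequentially"
  using i0(1)
proof
  assume "i0 \<in> U"
  with sign_U i0(2) have "0 < d $ i0" by force
  from filterlim_tendsto_pos_mult_at_bot[OF tendsto_const this] to_bot \<open>i0 \<in> U\<close>
  show ?thesis by blast
next
  assume "i0 \<in> V"
  with sign_V i0(2) have "d $ i0 < 0" by force
  from filterlim_tendsto_neg_mult_at_bot[OF tendsto_const this] to_top \<open>i0 \<in> V\<close>
  show ?thesis by blast
qed

lemma inner_tendsto_at_bot_of_sign_pattern:
  fixes L :: "nat \<Rightarrow> real^'n" and d :: "real^'n"
  assumes to_bot: "\<forall>i\<in>U. filterlim (\<lambda>n. L n $ i) at_bot sequentially"
    and to_top: "\<forall>i\<in>V. filterlim (\<lambda>n. L n $ i) at_top sequentially"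
    and bounded: "\<forall>i. i \<notin> U \<union> V \<longrightarrow> (\<exists>M. eventually (\<lambda>n. \<bar>L n $ i\<bar> \<le> M) sequentially)"
    and sign_U: "\<forall>i\<in>U. 0 \<le> d $ i" and sign_V: "\<forall>i\<in>V. d $ i \<le> 0"
    and i0: "i0 \<in> U \<union> V" "d $ i0 \<noteq> 0"
  shows "filterlim (\<lambda>n. inner d (L n)) at_bot sequentially"
proof -
  have "filterlim (\<lambda>n. \<Sum>i\<in>UNIV. d $ i * L n $ i) at_bot sequentially"
    by (rule sum_tendsto_at_bot_if_one_summand_does[where f = "\<lambda>i n. d $ i * L n $ i",
          OF sign_pattern_term_tendsto_at_bot[OF to_bot to_top sign_U sign_V i0]
            sign_pattern_term_bounded_above[OF to_bot to_top bounded sign_U sign_V]])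
  then show ?thesis by (simp add: inner_vec_def)
qed

lemma sign_pattern_vector_vanishes_if_bounded:
  fixes L :: "nat \<Rightarrow> real^'n" and d :: "real^'n"
  assumes to_bot: "\<forall>i\<in>U. filterlim (\<lambda>n. L n $ i) at_bot sequentially"
    and to_top: "\<forall>i\<in>V. filterlim (\<lambda>n. L n $ i) at_top sequentially"
    and bounded: "\<forall>i. i \<notin> U \<union> V \<longrightarrow> (\<exists>M. eventually (\<lambda>n. \<bar>L n $ i\<bar> \<le> M) sequentially)"
    and inner_bounded: "\<forall>n. \<bar>inner d (L n)\<bar> \<le> B"
    and sign: "(\<forall>i\<in>U. 0 \<le> d $ i) \<and> (\<forall>i\<in>V. d $ i \<le> 0)"
  shows "\<forall>i\<in>U \<union> V. d $ i = 0"
proof (rule ccontr)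
  assume "\<not> (\<forall>i\<in>U \<union> V. d $ i = 0)"
  then obtain i0 where "i0 \<in> U \<union> V" "d $ i0 \<noteq> 0" by blast
  with sign have "filterlim (\<lambda>n. inner d (L n)) at_bot sequentially"
    using inner_tendsto_at_bot_of_sign_pattern[OF to_bot to_top bounded] by blast
  then have "eventually (\<lambda>n. inner d (L n) \<le> - B - 1) sequentially"
    by (simp add: filterlim_at_bot)
  moreover have "eventually (\<lambda>n. - B \<le> inner d (L n)) sequentially"
    using inner_bounded by (intro always_eventually allI) (metis abs_le_iff minus_le_iff)
  ultimately have "eventually (\<lambda>n. False) sequentially"
    by eventually_elim simp
  then show False by simp
qed

theorem mainTheorem3:
  fixes C :: "(real^'n) set" and x :: "nat \<Rightarrow> real^'n"
    and P :: nat and T :: "nat \<Rightarrow> (real^'n) set" and K :: real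
    and U V :: "'n set"
  assumes "finite C"
    and "\<forall>n i. x n $ i > 0"
    and "partially_monotonic x"
    and "\<exists>i. (\<lambda>n. x n $ i) \<longlonglongrightarrow> 0 \<or> filterlim (\<lambda>n. x n $ i) at_top sequentially"
    and "U = {i. (\<lambda>n. x n $ i) \<longlonglongrightarrow> 0}"
    and "V = {j. filterlim (\<lambda>n. x n $ j) at_top sequentially}"
    and "partitioned_along_with C x P T K"
  shows "\<exists>w :: real^'n. respects_conservation w U V P T"
proof -
  define L where "L n = (\<chi> i. ln (x n $ i))" for n
  define D where "D = {yj - yl | yj yl. \<exists>i<P. yj \<in> T i \<and> yl \<in> T i}"
  have disj: "U \<inter> V = {}"
    using assms(5,6) not_tendsto_and_filterlim_at_infinity[OF trivial_limit_sequentially]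
    by (auto dest: filterlim_at_top_imp_at_infinity)
  have ne: "U \<union> V \<noteq> {}" using assms(4-6) by auto
  have D_bounded: "\<exists>B. \<forall>n. \<bar>inner d (L n)\<bar> \<le> B" if "d \<in> span D" for d
    using tier_span_log_bounded[OF assms(2,7)] that unfolding D_def L_def by blast
  have to_bot: "\<forall>i\<in>U. filterlim (\<lambda>n. L n $ i) at_bot sequentially"
    and to_top: "\<forall>i\<in>V. filterlim (\<lambda>n. L n $ i) at_top sequentially"
    and bounded: "\<forall>i. i \<notin> U \<union> V \<longrightarrow> (\<exists>M. eventually (\<lambda>n. \<bar>L n $ i\<bar> \<le> M) sequentially)"
    using log_coordinates_of_partially_monotonic[OF assms(2,3,5,6)] by (simp_all add: L_def)
  have "\<forall>z\<in>span D. (\<forall>i\<in>U. 0 \<le> z $ i) \<and> (\<forall>i\<in>V. z $ i \<le> 0) \<longrightarrow> (\<forall>i\<in>U \<union> V. z $ i = 0)"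
    using sign_pattern_vector_vanishes_if_bounded[OF to_bot to_top bounded] D_bounded by metis
  then obtain a where a: "\<forall>z\<in>span D. inner a z = 0" "{i. 0 < a $ i} = U" "{i. a $ i < 0} = V"
    using stiemke_alternative_sign_pattern[OF subspace_span disj ne] by blast
  have "inner a (y - y') = 0" if "i < P" "y \<in> T i" "y' \<in> T i" for i y y'
  proof -
    have "y - y' \<in> D" unfolding D_def using that by blast
    with a(1) show ?thesis using span_base by blast
  qed
  then have "respects_conservation a U V P T"
    unfolding respects_conservation_def using ne a(2,3) by blast
  then show ?thesis by blast
qed

end
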